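(* In the planar algebra $\mathcal P$ described in the context, the traces are: $\mathrm{tr}(\emptyset)=1$, $\mathrm{tr}(P_1)=2$, $\mathrm{tr}(P_2)=3$, $\mathrm{tr}(P_3)=4$, $\mathrm{tr}(P_4)=3$, $\mathrm{tr}(P_5)=2$, $\mathrm{tr}(P_6)=1$, $\mathrm{tr}(Q_4)=2$.
   Context: $\mathcal P$ is the unshaded planar algebra generated by a self-adjoint $S\in\mathcal P_4$ modulo: (i) a closed loop equals $2$; (ii) $S$ is uncuppable, uncappable and unsidecappable (multiplying by any Temperley–Lieb cup/cap element $e_j$ on top or bottom gives 0, and its left and right partial traces vanish); (iii) $S^2=6f^{(4)}+S$; (iv) the jellyfish relation: the rainbowed $S$ (all 8 strands bent to the bottom over the right) with an extra strand passing above it equals the same with the extra strand passing below the box, crossing over its 8 strands, crossings defined by the Kauffman rule crossing $=i\cdot(\text{A-smoothing})-i\cdot(\text{B-smoothing})$. Jones–Wenzl projections: $f^{(1)}=X$ (single strand), $f^{(k+1)}=f^{(k)}\otimes X-\frac{k}{k+1}(f^{(k)}\otimes X)e_k(f^{(k)}\otimes X)$, where $e_k$ has a cap and cup at positions $k,k+1$. Define $P_1=X$, $P_2=f^{(2)}$, $P_3=f^{(3)}$, $P_4=\frac35f^{(4)}-\frac15S$, $Q_4=\frac25f^{(4)}+\frac15S$, $P_5=P_4\otimes X-\frac43(P_4\otimes X)e_4(P_4\otimes X)$, $P_6=P_5\otimes X-\frac32(P_5\otimes X)e_5(P_5\otimes X)$. $\mathrm{tr}$ is the (right) trace, closing up all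 strands. *)

theory Defs
  imports Complex_Main
begin

section \<open>Unshaded planar algebras, presented as C-linear strict pivotal dagger categories
  generated by one symmetrically self-dual object (the single strand X)\<close>

text \<open>Hom k l is the space of diagrams with k boundary points at the bottom and l at the top;
  the n-box space P_n is Hom n n.  cmp g f is "g on top of f" (g after f), tns f g places
  f to the left of g.\<close>

record 'm pa =
  Hom  :: "nat \<Rightarrow> nat \<Rightarrow> 'm set"
  cmp  :: "'m \<Rightarrow> 'm \<Rightarrow> 'm"
  tns  :: "'m \<Rightarrow> 'm \<Rightarrow> 'm"
  idn  :: "nat \<Rightarrow> 'm"
  cupm :: 'm
  capm :: 'm
  scl  :: "complex \<Rightarrow> 'm \<Rightarrow> 'm"
  adj  :: "'m \<Rightarrow> 'm"

fun ev :: "'m pa \<Rightarrow> nat \<Rightarrow> 'm" where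
  "ev A 0 = idn A 0"
| "ev A (Suc n) = cmp A (ev A n) (tns A (tns A (idn A n) (capm A)) (idn A n))"

fun coev :: "'m pa \<Rightarrow> nat \<Rightarrow> 'm" where
  "coev A 0 = idn A 0"
| "coev A (Suc n) = cmp A (tns A (tns A (idn A n) (cupm A)) (idn A n)) (coev A n)"

text \<open>Right and left transposes (rotations by pi) of x in Hom k l.\<close>
definition rtrans :: "'m pa \<Rightarrow> nat \<Rightarrow> nat \<Rightarrow> 'm \<Rightarrow> 'm" where
  "rtrans A k l x = cmp A (tns A (idn A k) (ev A l))
      (cmp A (tns A (tns A (idn A k) x) (idn A l)) (tns A (coev A k) (idn A l)))"

definition ltrans :: "'m pa \<Rightarrow> nat \<Rightarrow> nat \<Rightarrow> 'm \<Rightarrow> 'm" where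
  "ltrans A k l x = cmp A (tns A (ev A l) (idn A k))
      (cmp A (tns A (tns A (idn A l) x) (idn A k)) (tns A (idn A l) (coev A k)))"

definition is_planar_algebra :: "('m::ab_group_add) pa \<Rightarrow> bool" where
  "is_planar_algebra A \<longleftrightarrow>
    \<comment> \<open>complex vector space structure\<close>
    (\<forall>a x y. scl A a (x + y) = scl A a x + scl A a y) \<and>
    (\<forall>a b x. scl A (a + b) x = scl A a x + scl A b x) \<and>
    (\<forall>a b x. scl A a (scl A b x) = scl A (a * b) x) \<and>
    (\<forall>x. scl A 1 x = x) \<and>
    \<comment> \<open>each Hom k l is a subspace\<close>
    (\<forall>k l. 0 \<in> Hom A k l \<and> (\<forall>x\<in>Hom A k l. \<forall>y\<in>Hom A k l. x + y \<in> Hom A k l)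
        \<and> (\<forall>a. \<forall>x\<in>Hom A k l. scl A a x \<in> Hom A k l)) \<and>
    \<comment> \<open>typing\<close>
    (\<forall>k l m f g. f \<in> Hom A k l \<longrightarrow> g \<in> Hom A l m \<longrightarrow> cmp A g f \<in> Hom A k m) \<and>
    (\<forall>k l k' l' f g. f \<in> Hom A k l \<longrightarrow> g \<in> Hom A k' l' \<longrightarrow> tns A f g \<in> Hom A (k + k') (l + l')) \<and>
    (\<forall>n. idn A n \<in> Hom A n n) \<and> cupm A \<in> Hom A 0 2 \<and> capm A \<in> Hom A 2 0 \<and>
    (\<forall>k l x. x \<in> Hom A k l \<longrightarrow> adj A x \<in> Hom A l k) \<and>
    \<comment> \<open>category\<close>
    (\<forall>k l m p f g h. f \<in> Hom A k l \<longrightarrow> g \<in> Hom A l m \<longrightarrow> h \<in> Hom A m p \<longrightarrow>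
        cmp A h (cmp A g f) = cmp A (cmp A h g) f) \<and>
    (\<forall>k l f. f \<in> Hom A k l \<longrightarrow> cmp A (idn A l) f = f \<and> cmp A f (idn A k) = f) \<and>
    \<comment> \<open>strict monoidal structure\<close>
    (\<forall>k l k' l' k'' l'' f g h. f \<in> Hom A k l \<longrightarrow> g \<in> Hom A k' l' \<longrightarrow> h \<in> Hom A k'' l'' \<longrightarrow>
        tns A (tns A f g) h = tns A f (tns A g h)) \<and>
    (\<forall>k l f. f \<in> Hom A k l \<longrightarrow> tns A (idn A 0) f = f \<and> tns A f (idn A 0) = f) \<and>
    (\<forall>m n. tns A (idn A m) (idn A n) = idn A (m + n)) \<and>
    (\<forall>k l m k' l' m' f g f' g'. f \<in> Hom A k l \<longrightarrow> g \<in> Hom A l m \<longrightarrow>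
        f' \<in> Hom A k' l' \<longrightarrow> g' \<in> Hom A l' m' \<longrightarrow>
        tns A (cmp A g f) (cmp A g' f') = cmp A (tns A g g') (tns A f f')) \<and>
    \<comment> \<open>bilinearity\<close>
    (\<forall>k l m f f' g g' a. f \<in> Hom A k l \<longrightarrow> f' \<in> Hom A k l \<longrightarrow> g \<in> Hom A l m \<longrightarrow> g' \<in> Hom A l m \<longrightarrow>
        cmp A (g + g') f = cmp A g f + cmp A g' f \<and> cmp A g (f + f') = cmp A g f + cmp A g f' \<and>
        cmp A (scl A a g) f = scl A a (cmp A g f) \<and> cmp A g (scl A a f) = scl A a (cmp A g f)) \<and>
    (\<forall>k l k' l' f f' g g' a. f \<in> Hom A k l \<longrightarrow> f' \<in> Hom A k l \<longrightarrow> g \<in> Hom A k' l' \<longrightarrow> g' \<in> Hom A k' l' \<longrightarrow>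
        tns A (f + f') g = tns A f g + tns A f' g \<and> tns A f (g + g') = tns A f g + tns A f g' \<and>
        tns A (scl A a f) g = scl A a (tns A f g) \<and> tns A f (scl A a g) = scl A a (tns A f g)) \<and>
    \<comment> \<open>zigzag (isotopy) relations for the self-dual strand\<close>
    cmp A (tns A (capm A) (idn A 1)) (tns A (idn A 1) (cupm A)) = idn A 1 \<and>
    cmp A (tns A (idn A 1) (capm A)) (tns A (cupm A) (idn A 1)) = idn A 1 \<and>
    \<comment> \<open>pivotality: rotating by pi clockwise or anticlockwise agrees (full rotation is trivial)\<close>
    (\<forall>k l x. x \<in> Hom A k l \<longrightarrow> ltrans A k l x = rtrans A k l x) \<and>
    \<comment> \<open>dagger (star) structure: reflection in a horizontal line, antilinear\<close>
    (\<forall>k l x. x \<in> Hom A k l \<longrightarrow> adj A (adj A x) = x) \<and>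
    (\<forall>k l m f g. f \<in> Hom A k l \<longrightarrow> g \<in> Hom A l m \<longrightarrow> adj A (cmp A g f) = cmp A (adj A f) (adj A g)) \<and>
    (\<forall>k l k' l' f g. f \<in> Hom A k l \<longrightarrow> g \<in> Hom A k' l' \<longrightarrow> adj A (tns A f g) = tns A (adj A f) (adj A g)) \<and>
    (\<forall>n. adj A (idn A n) = idn A n) \<and> adj A (cupm A) = capm A \<and>
    (\<forall>k l x y a. x \<in> Hom A k l \<longrightarrow> y \<in> Hom A k l \<longrightarrow>
        adj A (x + y) = adj A x + adj A y \<and> adj A (scl A a x) = scl A (cnj a) (adj A x))"

definition tr :: "'m pa \<Rightarrow> nat \<Rightarrow> 'm \<Rightarrow> 'm" where
  "tr A n x = cmp A (ev A n) (cmp A (tns A x (idn A n)) (coev A n))"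

definition TLe :: "'m pa \<Rightarrow> nat \<Rightarrow> nat \<Rightarrow> 'm" where
  "TLe A n j = tns A (tns A (idn A (j - 1)) (cmp A (cupm A) (capm A))) (idn A (n - j - 1))"

fun jw :: "('m::ab_group_add) pa \<Rightarrow> nat \<Rightarrow> 'm" where
  "jw A 0 = idn A 0"
| "jw A (Suc 0) = idn A 1"
| "jw A (Suc (Suc k)) =
     (let a = tns A (jw A (Suc k)) (idn A 1)
      in a - scl A (of_nat (Suc k) / of_nat (Suc (Suc k)))
               (cmp A (cmp A a (TLe A (Suc (Suc k)) (Suc k))) a))"

text \<open>Crossing by the Kauffman rule: i (A-smoothing) - i (B-smoothing).  (The mirror
  crossing is the negative of this one; the jellyfish relation below involves 8 crossings,
  so it does not depend on this convention.)\<close>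
definition xing :: "('m::ab_group_add) pa \<Rightarrow> 'm" where
  "xing A = scl A \<i> (idn A 2) - scl A \<i> (cmp A (cupm A) (capm A))"

definition xat :: "('m::ab_group_add) pa \<Rightarrow> nat \<Rightarrow> 'm" where
  "xat A j = tns A (tns A (idn A (j - 1)) (xing A)) (idn A (9 - j - 1))"

fun brd :: "('m::ab_group_add) pa \<Rightarrow> nat \<Rightarrow> 'm" where
  "brd A 0 = idn A 9"
| "brd A (Suc j) = cmp A (xat A (Suc j)) (brd A j)"

definition rainbow :: "'m pa \<Rightarrow> 'm \<Rightarrow> 'm" where
  "rainbow A S = cmp A (ev A 4) (tns A S (idn A 4))"

text \<open>Jellyfish relation: extra strand passing above the rainbowed S equals the extra
  strand passing below it, crossing its 8 strands.\<close>
definition jellyfish :: "('m::ab_group_add) pa \<Rightarrow> 'm \<Rightarrow> bool" where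
  "jellyfish A S \<longleftrightarrow>
     cmp A (capm A) (tns A (tns A (idn A 1) (rainbow A S)) (idn A 1))
   = cmp A (tns A (rainbow A S) (capm A)) (tns A (brd A 8) (idn A 1))"

definition generator_rels :: "('m::ab_group_add) pa \<Rightarrow> 'm \<Rightarrow> bool" where
  "generator_rels A S \<longleftrightarrow>
     S \<in> Hom A 4 4 \<and> adj A S = S \<and>
     cmp A (capm A) (cupm A) = scl A 2 (idn A 0) \<and>
     (\<forall>j\<in>{1,2,3}. cmp A (TLe A 4 j) S = 0 \<and> cmp A S (TLe A 4 j) = 0) \<and>
     cmp A (tns A (idn A 3) (capm A)) (cmp A (tns A S (idn A 1)) (tns A (idn A 3) (cupm A))) = 0 \<and>
     cmp A (tns A (capm A) (idn A 3)) (cmp A (tns A (idn A 1) S) (tns A (cupm A) (idn A 3))) = 0 \<and>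
     cmp A S S = scl A 6 (jw A 4) + S \<and>
     jellyfish A S"

definition P4 :: "('m::ab_group_add) pa \<Rightarrow> 'm \<Rightarrow> 'm" where
  "P4 A S = scl A (3/5) (jw A 4) - scl A (1/5) S"

definition Q4 :: "('m::ab_group_add) pa \<Rightarrow> 'm \<Rightarrow> 'm" where
  "Q4 A S = scl A (2/5) (jw A 4) + scl A (1/5) S"

definition P5 :: "('m::ab_group_add) pa \<Rightarrow> 'm \<Rightarrow> 'm" where
  "P5 A S = (let a = tns A (P4 A S) (idn A 1)
             in a - scl A (4/3) (cmp A (cmp A a (TLe A 5 4)) a))"

definition P6 :: "('m::ab_group_add) pa \<Rightarrow> 'm \<Rightarrow> 'm" where
  "P6 A S = (let a = tns A (P5 A S) (idn A 1)
             in a - scl A (3/2) (cmp A (cmp A a (TLe A 6 5)) a))"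

end

theory Submission
  imports Defs
begin

(* Traces are computed one strand at a time: closing the rightmost strand of x \<in> P_(n+1)
   gives its right partial trace in P_n, and tr_(n+1) x = tr_n (partial trace of x).
   Call p \<in> P_(n+1) idempotent over q \<in> P_n with ratio r if p is idempotent, absorbs q \<otimes> 1
   and has partial trace r q.  If c r = 1, the Wenzl recursion
     p' = (p \<otimes> 1) - c (p \<otimes> 1) e_(n+1) (p \<otimes> 1)
   makes p' idempotent over p with ratio \<delta> - c, where \<delta> = 2 is the value of a closed loop.
   Starting from a single strand this gives tr f^(n) = n + 1.  Since S is uncappable it absorbs
   f^(4), so S^2 = 6 f^(4) + S makes P_4 idempotent; its partial trace is (3/5)(5/4) f^(3),
   because S has zero partial trace.  The ratios of P_4, P_5, P_6 are therefore
   3/4, 2 - 4/3 = 2/3 and 2 - 3/2 = 1/2, and that of Q_4 is (2/5)(5/4) = 1/2. *)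

section \<open>The axioms in rule form\<close>

locale planar_algebra =
  fixes A :: "('m::ab_group_add) pa"
  assumes is_planar_algebra: "is_planar_algebra A"
begin

lemmas axioms_unfolded = is_planar_algebra[unfolded is_planar_algebra_def]

lemma scl_add_right: "scl A a (x + y) = scl A a x + scl A a y"
  using axioms_unfolded by (elim conjE) (simp only:)
lemma scl_add_left: "scl A (a + b) x = scl A a x + scl A b x"
  using axioms_unfolded by (elim conjE) (simp only:)
lemma scl_scl: "scl A a (scl A b x) = scl A (a * b) x"
  using axioms_unfolded by (elim conjE) (simp only:)
lemma scl_one: "scl A 1 x = x"
  using axioms_unfolded by (elim conjE) (simp only:)
lemma zero_in_Hom: "0 \<in> Hom A k l"
  using axioms_unfolded by (elim conjE) (simp only:)
lemma add_in_Hom: "x \<in> Hom A k l \<Longrightarrow> y \<in> Hom A k l \<Longrightarrow> x + y \<in> Hom A k l"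
  using axioms_unfolded by (elim conjE) (simp only:)
lemma scl_in_Hom: "x \<in> Hom A k l \<Longrightarrow> scl A a x \<in> Hom A k l"
  using axioms_unfolded by (elim conjE) (simp only:)
lemma cmp_in_Hom: "f \<in> Hom A k l \<Longrightarrow> g \<in> Hom A l m \<Longrightarrow> cmp A g f \<in> Hom A k m"
  using axioms_unfolded by (elim conjE) (simp only:)
lemma tns_in_Hom:
  "f \<in> Hom A k l \<Longrightarrow> g \<in> Hom A k' l' \<Longrightarrow> n = k + k' \<Longrightarrow> m = l + l' \<Longrightarrow> tns A f g \<in> Hom A n m"
  using axioms_unfolded by (elim conjE) (simp only:)
lemma idn_in_Hom: "idn A n \<in> Hom A n n"
  using axioms_unfolded by (elim conjE) (simp only:)
lemma cupm_in_Hom: "cupm A \<in> Hom A 0 2"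
  using axioms_unfolded by (elim conjE) (simp only:)
lemma capm_in_Hom: "capm A \<in> Hom A 2 0"
  using axioms_unfolded by (elim conjE) (simp only:)
lemma cmp_assoc:
  "f \<in> Hom A k l \<Longrightarrow> g \<in> Hom A l m \<Longrightarrow> h \<in> Hom A m p \<Longrightarrow>
    cmp A h (cmp A g f) = cmp A (cmp A h g) f"
  using axioms_unfolded by (elim conjE) (simp only:)
lemma cmp_idn_left: "f \<in> Hom A k l \<Longrightarrow> cmp A (idn A l) f = f"
  using axioms_unfolded by (elim conjE) (simp only:)
lemma cmp_idn_right: "f \<in> Hom A k l \<Longrightarrow> cmp A f (idn A k) = f"
  using axioms_unfolded by (elim conjE) (simp only:)
lemma tns_assoc:
  "f \<in> Hom A k l \<Longrightarrow> g \<in> Hom A k' l' \<Longrightarrow> h \<in> Hom A k'' l'' \<Longrightarrow>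
    tns A (tns A f g) h = tns A f (tns A g h)"
  using axioms_unfolded by (elim conjE) (simp only:)
lemma tns_idn0_right: "f \<in> Hom A k l \<Longrightarrow> tns A f (idn A 0) = f"
  using axioms_unfolded by (elim conjE) (simp only:)
lemma tns_idn_idn: "tns A (idn A m) (idn A n) = idn A (m + n)"
  using axioms_unfolded by (elim conjE) (simp only:)
lemma interchange:
  "f \<in> Hom A k l \<Longrightarrow> g \<in> Hom A l m \<Longrightarrow> f' \<in> Hom A k' l' \<Longrightarrow> g' \<in> Hom A l' m' \<Longrightarrow>
    tns A (cmp A g f) (cmp A g' f') = cmp A (tns A g g') (tns A f f')"
  using axioms_unfolded by (elim conjE) (simp only:)
lemma cmp_add_left:
  "f \<in> Hom A k l \<Longrightarrow> g \<in> Hom A l m \<Longrightarrow> g' \<in> Hom A l m \<Longrightarrow> cmp A (g + g') f = cmp A g f + cmp A g' f"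
  using axioms_unfolded by (elim conjE) (simp only:)
lemma cmp_add_right:
  "f \<in> Hom A k l \<Longrightarrow> f' \<in> Hom A k l \<Longrightarrow> g \<in> Hom A l m \<Longrightarrow> cmp A g (f + f') = cmp A g f + cmp A g f'"
  using axioms_unfolded by (elim conjE) (simp only:)
lemma cmp_scl_left: "f \<in> Hom A k l \<Longrightarrow> g \<in> Hom A l m \<Longrightarrow> cmp A (scl A a g) f = scl A a (cmp A g f)"
  using axioms_unfolded by (elim conjE) (simp only:)
lemma cmp_scl_right: "f \<in> Hom A k l \<Longrightarrow> g \<in> Hom A l m \<Longrightarrow> cmp A g (scl A a f) = scl A a (cmp A g f)"
  using axioms_unfolded by (elim conjE) (simp only:)
lemma tns_add_left:
  "f \<in> Hom A k l \<Longrightarrow> f' \<in> Hom A k l \<Longrightarrow> g \<in> Hom A k' l' \<Longrightarrow> tns A (f + f') g = tns A f g + tns A f' g"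
  using axioms_unfolded by (elim conjE) (simp only:)
lemma tns_scl_left: "f \<in> Hom A k l \<Longrightarrow> g \<in> Hom A k' l' \<Longrightarrow> tns A (scl A a f) g = scl A a (tns A f g)"
  using axioms_unfolded by (elim conjE) (simp only:)
lemma tns_scl_right: "f \<in> Hom A k l \<Longrightarrow> g \<in> Hom A k' l' \<Longrightarrow> tns A f (scl A a g) = scl A a (tns A f g)"
  using axioms_unfolded by (elim conjE) (simp only:)
lemma zigzag_left: "cmp A (tns A (capm A) (idn A 1)) (tns A (idn A 1) (cupm A)) = idn A 1"
  using axioms_unfolded by (elim conjE) (simp only:)
lemma zigzag_right: "cmp A (tns A (idn A 1) (capm A)) (tns A (cupm A) (idn A 1)) = idn A 1"
  using axioms_unfolded by (elim conjE) (simp only:)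

lemma scl_zero_left: "scl A 0 x = 0"
  using scl_add_left[of 0 0 x] by simp

lemma scl_zero_right: "scl A a 0 = 0"
  using scl_add_right[of a 0 0] by simp

lemma scl_minus_one: "scl A (-1) x = - x"
  using scl_add_left[of 1 "-1" x] by (simp add: scl_one scl_zero_left add_eq_0_iff)

lemma diff_eq_add_scl: "x - y = x + scl A (-1) y"
  by (simp add: scl_minus_one)

lemma scl_diff_right: "scl A a (x - y) = scl A a x - scl A a y"
  by (simp add: diff_eq_add_scl scl_add_right scl_scl mult.commute)

lemma scl_diff_left: "scl A (a - b) x = scl A a x - scl A b x"
  using scl_add_left[of "a - b" b x] by (simp add: eq_diff_eq)

lemma diff_in_Hom: "x \<in> Hom A k l \<Longrightarrow> y \<in> Hom A k l \<Longrightarrow> x - y \<in> Hom A k l"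
  by (simp add: diff_eq_add_scl add_in_Hom scl_in_Hom)

lemma cmp_diff_left:
  "f \<in> Hom A k l \<Longrightarrow> g \<in> Hom A l m \<Longrightarrow> g' \<in> Hom A l m \<Longrightarrow> cmp A (g - g') f = cmp A g f - cmp A g' f"
  by (simp add: diff_eq_add_scl cmp_add_left cmp_scl_left scl_in_Hom)

lemma cmp_diff_right:
  "f \<in> Hom A k l \<Longrightarrow> f' \<in> Hom A k l \<Longrightarrow> g \<in> Hom A l m \<Longrightarrow> cmp A g (f - f') = cmp A g f - cmp A g f'"
  by (simp add: diff_eq_add_scl cmp_add_right cmp_scl_right scl_in_Hom)

lemma tns_diff_left:
  "f \<in> Hom A k l \<Longrightarrow> f' \<in> Hom A k l \<Longrightarrow> g \<in> Hom A k' l' \<Longrightarrow> tns A (f - f') g = tns A f g - tns A f' g"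
  by (simp add: diff_eq_add_scl tns_add_left tns_scl_left scl_in_Hom)

lemma cmp_zero_left: "f \<in> Hom A k l \<Longrightarrow> cmp A 0 f = 0"
  using cmp_scl_left[of f k l 0 l 0] zero_in_Hom by (simp add: scl_zero_left)

lemma cmp_zero_right: "g \<in> Hom A l m \<Longrightarrow> cmp A g 0 = 0"
  using cmp_scl_right[of 0 l l g m 0] zero_in_Hom by (simp add: scl_zero_left)

lemma cmp_idn_idn: "cmp A (idn A n) (idn A n) = idn A n"
  by (rule cmp_idn_left[OF idn_in_Hom])

lemmas Hom_intros =
  cmp_in_Hom tns_in_Hom idn_in_Hom cupm_in_Hom capm_in_Hom add_in_Hom diff_in_Hom scl_in_Hom

lemmas End_simps =
  cmp_in_Hom[where k = n and l = n and m = n] add_in_Hom[where k = n and l = n]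
  diff_in_Hom[where k = n and l = n] scl_in_Hom[where k = n and l = n]
  cmp_assoc[where k = n and l = n and m = n and p = n]
  cmp_add_left[where k = n and l = n and m = n] cmp_add_right[where k = n and l = n and m = n]
  cmp_diff_left[where k = n and l = n and m = n] cmp_diff_right[where k = n and l = n and m = n]
  cmp_scl_left[where k = n and l = n and m = n] cmp_scl_right[where k = n and l = n and m = n]
  for n

end

section \<open>Partial traces\<close>

definition pad :: "'m pa \<Rightarrow> nat \<Rightarrow> 'm \<Rightarrow> 'm" where
  "pad A m x = tns A x (idn A m)"

definition rcap :: "'m pa \<Rightarrow> nat \<Rightarrow> 'm" where
  "rcap A n = tns A (idn A n) (capm A)"

definition rcup :: "'m pa \<Rightarrow> nat \<Rightarrow> 'm" where
  "rcup A n = tns A (idn A n) (cupm A)"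

definition ptrace :: "'m pa \<Rightarrow> nat \<Rightarrow> 'm \<Rightarrow> 'm" where
  "ptrace A n x = cmp A (rcap A n) (cmp A (pad A 1 x) (rcup A n))"

definition e_last :: "'m pa \<Rightarrow> nat \<Rightarrow> 'm" where
  "e_last A n = cmp A (rcup A n) (rcap A n)"

context planar_algebra
begin

lemma pad_in_Hom: "x \<in> Hom A k l \<Longrightarrow> k' = k + m \<Longrightarrow> l' = l + m \<Longrightarrow> pad A m x \<in> Hom A k' l'"
  unfolding pad_def by (rule tns_in_Hom[OF _ idn_in_Hom])

lemma rcap_in_Hom: "rcap A n \<in> Hom A (n + 2) n"
  unfolding rcap_def by (rule tns_in_Hom[OF idn_in_Hom capm_in_Hom]) simp_all

lemma rcup_in_Hom: "rcup A n \<in> Hom A n (n + 2)"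
  unfolding rcup_def by (rule tns_in_Hom[OF idn_in_Hom cupm_in_Hom]) simp_all

lemma ptrace_in_Hom: "x \<in> Hom A (Suc n) (Suc n) \<Longrightarrow> ptrace A n x \<in> Hom A n n"
  unfolding ptrace_def by (intro cmp_in_Hom[OF _ rcap_in_Hom] cmp_in_Hom[OF rcup_in_Hom] pad_in_Hom) simp_all

lemma e_last_in_Hom: "e_last A n \<in> Hom A (n + 2) (n + 2)"
  unfolding e_last_def by (rule cmp_in_Hom[OF rcap_in_Hom rcup_in_Hom])

lemma ev_in_Hom: "ev A n \<in> Hom A (n + n) 0"
  by (induction n) (rule Hom_intros | assumption | simp)+

lemma coev_in_Hom: "coev A n \<in> Hom A 0 (n + n)"
  by (induction n) (rule Hom_intros | assumption | simp)+

lemma pad_cmp: "x \<in> Hom A k l \<Longrightarrow> y \<in> Hom A l p \<Longrightarrow> pad A m (cmp A y x) = cmp A (pad A m y) (pad A m x)"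
  unfolding pad_def
  using interchange[of x k l y p "idn A m" m m "idn A m" m] by (simp add: cmp_idn_idn idn_in_Hom)

lemma pad_pad: "x \<in> Hom A k l \<Longrightarrow> pad A m (pad A m' x) = pad A (m' + m) x"
  unfolding pad_def
  using tns_assoc[of x k l "idn A m'" m' m' "idn A m" m m] by (simp add: idn_in_Hom tns_idn_idn)

lemma pad1_pad1: "x \<in> Hom A k l \<Longrightarrow> pad A 1 (pad A 1 x) = pad A 2 x"
  using pad_pad[of x k l 1 1] by (simp add: numeral_2_eq_2)

lemma pad_zero: "x \<in> Hom A k l \<Longrightarrow> pad A 0 x = x"
  unfolding pad_def by (rule tns_idn0_right)

lemma pad_idn: "pad A m (idn A n) = idn A (n + m)"
  unfolding pad_def by (rule tns_idn_idn)

lemma pad_add: "x \<in> Hom A k l \<Longrightarrow> y \<in> Hom A k l \<Longrightarrow> pad A m (x + y) = pad A m x + pad A m y"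
  unfolding pad_def by (rule tns_add_left[OF _ _ idn_in_Hom])

lemma pad_diff: "x \<in> Hom A k l \<Longrightarrow> y \<in> Hom A k l \<Longrightarrow> pad A m (x - y) = pad A m x - pad A m y"
  unfolding pad_def by (rule tns_diff_left[OF _ _ idn_in_Hom])

lemma pad_scl: "x \<in> Hom A k l \<Longrightarrow> pad A m (scl A a x) = scl A a (pad A m x)"
  unfolding pad_def by (rule tns_scl_left[OF _ idn_in_Hom])

lemma pad_wenzl:
  assumes a: "a \<in> Hom A n n" and e: "e \<in> Hom A n n"
  shows "pad A m (a - scl A c (cmp A (cmp A a e) a))
       = pad A m a - scl A c (cmp A (cmp A (pad A m a) (pad A m e)) (pad A m a))"
proof -
  have ae: "cmp A a e \<in> Hom A n n" and aea: "cmp A (cmp A a e) a \<in> Hom A n n"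
    using a e by (simp_all add: End_simps)
  show ?thesis
    by (simp only: pad_diff[OF a scl_in_Hom[OF aea]] pad_scl[OF aea] pad_cmp[OF a ae] pad_cmp[OF e a])
qed

lemma tns_eq_cmp_pad:
  assumes "y \<in> Hom A k l" and "z \<in> Hom A k' l'"
  shows "tns A y z = cmp A (pad A l' y) (tns A (idn A k) z)"
    and "tns A y z = cmp A (tns A (idn A l) z) (pad A k' y)"
  unfolding pad_def
  using interchange[of "idn A k" k k y l z k' l' "idn A l'" l']
    interchange[of y k l "idn A l" l "idn A k'" k' k' z l'] assms
  by (simp_all add: idn_in_Hom cmp_idn_left cmp_idn_right)

lemma cap_slide: "u \<in> Hom A n n \<Longrightarrow> cmp A (rcap A n) (pad A 2 u) = cmp A u (rcap A n)"
  using tns_eq_cmp_pad[of u n n "capm A" 2 0] unfolding rcap_def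
  by (simp add: capm_in_Hom pad_zero)

lemma cup_slide: "u \<in> Hom A n n \<Longrightarrow> cmp A (pad A 2 u) (rcup A n) = cmp A (rcup A n) u"
  using tns_eq_cmp_pad[of u n n "cupm A" 0 2] unfolding rcup_def
  by (simp add: cupm_in_Hom pad_zero)

lemma tns_idn_cmp:
  "a \<in> Hom A k l \<Longrightarrow> b \<in> Hom A l p \<Longrightarrow> cmp A (tns A (idn A m) b) (tns A (idn A m) a) = tns A (idn A m) (cmp A b a)"
  using interchange[of "idn A m" m m "idn A m" m a k l b p] by (simp add: cmp_idn_idn idn_in_Hom)

lemma rcap_rcup:
  assumes loop: "cmp A (capm A) (cupm A) = scl A \<delta> (idn A 0)"
  shows "cmp A (rcap A n) (rcup A n) = scl A \<delta> (idn A n)"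
proof -
  have "cmp A (rcap A n) (rcup A n) = tns A (idn A n) (cmp A (capm A) (cupm A))"
    unfolding rcap_def rcup_def by (rule tns_idn_cmp[OF cupm_in_Hom capm_in_Hom])
  then show ?thesis
    by (simp add: loop tns_scl_right[OF idn_in_Hom idn_in_Hom] tns_idn_idn)
qed

lemma pad1_in_Hom_add2: "x \<in> Hom A (Suc n) (Suc n) \<Longrightarrow> pad A 1 x \<in> Hom A (n + 2) (n + 2)"
  by (rule pad_in_Hom) simp_all

lemma pad1_in_Hom: "x \<in> Hom A n n \<Longrightarrow> pad A 1 x \<in> Hom A (Suc n) (Suc n)"
  by (rule pad_in_Hom) simp_all

lemma pad2_in_Hom: "x \<in> Hom A n n \<Longrightarrow> pad A 2 x \<in> Hom A (n + 2) (n + 2)"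
  by (rule pad_in_Hom) simp_all

lemma ptrace_add:
  assumes x: "x \<in> Hom A (Suc n) (Suc n)" and y: "y \<in> Hom A (Suc n) (Suc n)"
  shows "ptrace A n (x + y) = ptrace A n x + ptrace A n y"
proof -
  note px = pad1_in_Hom_add2[OF x] and py = pad1_in_Hom_add2[OF y]
  show ?thesis
    unfolding ptrace_def pad_add[OF x y]
    by (simp only: cmp_add_left[OF rcup_in_Hom px py]
        cmp_add_right[OF cmp_in_Hom[OF rcup_in_Hom px] cmp_in_Hom[OF rcup_in_Hom py] rcap_in_Hom])
qed

lemma ptrace_scl:
  assumes x: "x \<in> Hom A (Suc n) (Suc n)"
  shows "ptrace A n (scl A a x) = scl A a (ptrace A n x)"
proof -
  note px = pad1_in_Hom_add2[OF x]
  show ?thesis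
    unfolding ptrace_def pad_scl[OF x]
    by (simp only: cmp_scl_left[OF rcup_in_Hom px] cmp_scl_right[OF cmp_in_Hom[OF rcup_in_Hom px] rcap_in_Hom])
qed

lemma ptrace_diff:
  "x \<in> Hom A (Suc n) (Suc n) \<Longrightarrow> y \<in> Hom A (Suc n) (Suc n) \<Longrightarrow> ptrace A n (x - y) = ptrace A n x - ptrace A n y"
  by (simp add: diff_eq_add_scl ptrace_add ptrace_scl scl_in_Hom)

lemma ptrace_pad:
  assumes loop: "cmp A (capm A) (cupm A) = scl A \<delta> (idn A 0)" and y: "y \<in> Hom A n n"
  shows "ptrace A n (pad A 1 y) = scl A \<delta> y"
proof -
  have "ptrace A n (pad A 1 y) = cmp A (rcap A n) (cmp A (pad A 2 y) (rcup A n))"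
    unfolding ptrace_def pad1_pad1[OF y] ..
  also have "\<dots> = cmp A (cmp A (rcap A n) (rcup A n)) y"
    unfolding cup_slide[OF y] by (rule cmp_assoc[OF y rcup_in_Hom rcap_in_Hom])
  also have "\<dots> = scl A \<delta> y"
    unfolding rcap_rcup[OF loop] cmp_scl_left[OF y idn_in_Hom] cmp_idn_left[OF y] ..
  finally show ?thesis .
qed

lemma ptrace_cmp_pad_left:
  assumes u: "u \<in> Hom A n n" and x: "x \<in> Hom A (Suc n) (Suc n)"
  shows "ptrace A n (cmp A (pad A 1 u) x) = cmp A u (ptrace A n x)"
proof -
  note px = pad1_in_Hom_add2[OF x] and pu = pad2_in_Hom[OF u]
  note xcup = cmp_in_Hom[OF rcup_in_Hom px]
  have "pad A 1 (cmp A (pad A 1 u) x) = cmp A (pad A 2 u) (pad A 1 x)"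
    by (simp only: pad_cmp[OF x pad1_in_Hom[OF u], where m = 1] pad1_pad1[OF u])
  then have "ptrace A n (cmp A (pad A 1 u) x)
      = cmp A (rcap A n) (cmp A (pad A 2 u) (cmp A (pad A 1 x) (rcup A n)))"
    unfolding ptrace_def by (simp only: cmp_assoc[OF rcup_in_Hom px pu])
  also have "\<dots> = cmp A (cmp A u (rcap A n)) (cmp A (pad A 1 x) (rcup A n))"
    unfolding cap_slide[OF u, symmetric] by (rule cmp_assoc[OF xcup pu rcap_in_Hom])
  also have "\<dots> = cmp A u (ptrace A n x)"
    unfolding ptrace_def by (rule cmp_assoc[OF xcup rcap_in_Hom u, symmetric])
  finally show ?thesis .
qed

lemma ptrace_cmp_pad_right:
  assumes v: "v \<in> Hom A n n" and x: "x \<in> Hom A (Suc n) (Suc n)"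
  shows "ptrace A n (cmp A x (pad A 1 v)) = cmp A (ptrace A n x) v"
proof -
  note px = pad1_in_Hom_add2[OF x] and pv = pad2_in_Hom[OF v]
  note capx = cmp_in_Hom[OF px rcap_in_Hom]
  have "pad A 1 (cmp A x (pad A 1 v)) = cmp A (pad A 1 x) (pad A 2 v)"
    by (simp only: pad_cmp[OF pad1_in_Hom[OF v] x, where m = 1] pad1_pad1[OF v])
  then have "ptrace A n (cmp A x (pad A 1 v))
      = cmp A (cmp A (rcap A n) (pad A 1 x)) (cmp A (pad A 2 v) (rcup A n))"
    unfolding ptrace_def
    by (simp only: cmp_assoc[OF rcup_in_Hom pv px, symmetric] cmp_assoc[OF cmp_in_Hom[OF rcup_in_Hom pv] px rcap_in_Hom])
  also have "\<dots> = cmp A (cmp A (cmp A (rcap A n) (pad A 1 x)) (rcup A n)) v"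
    unfolding cup_slide[OF v] by (rule cmp_assoc[OF v rcup_in_Hom capx])
  also have "\<dots> = cmp A (ptrace A n x) v"
    unfolding ptrace_def cmp_assoc[OF rcup_in_Hom px rcap_in_Hom] ..
  finally show ?thesis .
qed

lemma ptrace_sandwich:
  assumes u: "u \<in> Hom A n n" and v: "v \<in> Hom A n n" and x: "x \<in> Hom A (Suc n) (Suc n)"
  shows "ptrace A n (cmp A (cmp A (pad A 1 u) x) (pad A 1 v)) = cmp A (cmp A u (ptrace A n x)) v"
proof -
  have "cmp A (pad A 1 u) x \<in> Hom A (Suc n) (Suc n)"
    using x pad1_in_Hom[OF u] by (rule cmp_in_Hom)
  then show ?thesis
    by (simp only: ptrace_cmp_pad_right[OF v] ptrace_cmp_pad_left[OF u x])
qed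

lemma e_last_eq_tns: "e_last A n = tns A (idn A n) (cmp A (cupm A) (capm A))"
  unfolding e_last_def rcup_def rcap_def by (rule tns_idn_cmp[OF capm_in_Hom cupm_in_Hom])

lemma tns_idn_tns_idn: "x \<in> Hom A k l \<Longrightarrow> tns A (idn A m) (tns A (idn A n) x) = tns A (idn A (m + n)) x"
  using tns_assoc[OF idn_in_Hom idn_in_Hom, of x k l m n] by (simp add: tns_idn_idn)

lemma zigzag_cupcap: "cmp A (rcap A 1) (cmp A (pad A 1 (cmp A (cupm A) (capm A))) (rcup A 1)) = idn A 1"
proof -
  have cup1: "tns A (cupm A) (idn A 1) \<in> Hom A 1 (1 + 2)"
    and cap1: "tns A (capm A) (idn A 1) \<in> Hom A (1 + 2) 1"
    by (rule tns_in_Hom[OF cupm_in_Hom idn_in_Hom] tns_in_Hom[OF capm_in_Hom idn_in_Hom]; simp)+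
  have "pad A 1 (cmp A (cupm A) (capm A)) = cmp A (tns A (cupm A) (idn A 1)) (tns A (capm A) (idn A 1))"
    unfolding pad_def using interchange[OF capm_in_Hom cupm_in_Hom idn_in_Hom idn_in_Hom, of 1]
    by (simp add: cmp_idn_idn)
  then have "cmp A (rcap A 1) (cmp A (pad A 1 (cmp A (cupm A) (capm A))) (rcup A 1))
      = cmp A (cmp A (rcap A 1) (tns A (cupm A) (idn A 1))) (cmp A (tns A (capm A) (idn A 1)) (rcup A 1))"
    by (simp only: cmp_assoc[OF rcup_in_Hom cap1 cup1, symmetric]
        cmp_assoc[OF cmp_in_Hom[OF rcup_in_Hom cap1] cup1 rcap_in_Hom])
  also have "\<dots> = idn A 1"
    unfolding rcap_def rcup_def zigzag_left zigzag_right by (rule cmp_idn_idn)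
  finally show ?thesis .
qed

lemma ptrace_e_last: "ptrace A (Suc n) (e_last A n) = idn A (Suc n)"
proof -
  define CC where "CC = cmp A (cupm A) (capm A)"
  have CC: "CC \<in> Hom A 2 2" unfolding CC_def by (rule cmp_in_Hom[OF capm_in_Hom cupm_in_Hom])
  have PC: "pad A 1 CC \<in> Hom A (1 + 2) (1 + 2)" by (rule pad_in_Hom[OF CC]) simp_all
  have "rcap A (Suc n) = tns A (idn A n) (rcap A 1)" and "rcup A (Suc n) = tns A (idn A n) (rcup A 1)"
    unfolding rcap_def rcup_def
    by (simp_all add: tns_idn_tns_idn[OF capm_in_Hom] tns_idn_tns_idn[OF cupm_in_Hom])
  moreover have "pad A 1 (e_last A n) = tns A (idn A n) (pad A 1 CC)"
    unfolding e_last_eq_tns pad_def CC_def[symmetric] by (rule tns_assoc[OF idn_in_Hom CC idn_in_Hom])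
  ultimately have "ptrace A (Suc n) (e_last A n)
      = tns A (idn A n) (cmp A (rcap A 1) (cmp A (pad A 1 CC) (rcup A 1)))"
    unfolding ptrace_def
    by (simp only: tns_idn_cmp[OF rcup_in_Hom PC] tns_idn_cmp[OF cmp_in_Hom[OF rcup_in_Hom PC] rcap_in_Hom])
  then show ?thesis
    unfolding CC_def zigzag_cupcap tns_idn_idn by simp
qed

lemma e_last_sandwich:
  assumes x: "x \<in> Hom A (Suc n) (Suc n)"
  shows "cmp A (cmp A (e_last A n) (pad A 1 x)) (e_last A n) = cmp A (pad A 2 (ptrace A n x)) (e_last A n)"
proof -
  note X = pad1_in_Hom_add2[OF x] and P = ptrace_in_Hom[OF x]
  note capX = cmp_in_Hom[OF X rcap_in_Hom]
  have "cmp A (cmp A (e_last A n) (pad A 1 x)) (e_last A n)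
      = cmp A (rcup A n) (cmp A (cmp A (cmp A (rcap A n) (pad A 1 x)) (rcup A n)) (rcap A n))"
    unfolding e_last_def
    by (simp only: cmp_assoc[OF X rcap_in_Hom rcup_in_Hom, symmetric]
        cmp_assoc[OF e_last_in_Hom[unfolded e_last_def] capX rcup_in_Hom, symmetric]
        cmp_assoc[OF rcap_in_Hom rcup_in_Hom capX])
  also have "\<dots> = cmp A (cmp A (rcup A n) (ptrace A n x)) (rcap A n)"
    unfolding ptrace_def cmp_assoc[OF rcup_in_Hom X rcap_in_Hom, symmetric]
    by (rule cmp_assoc[OF rcap_in_Hom P[unfolded ptrace_def] rcup_in_Hom])
  also have "\<dots> = cmp A (pad A 2 (ptrace A n x)) (e_last A n)"
    unfolding e_last_def cup_slide[OF P, symmetric]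
    by (rule cmp_assoc[OF rcap_in_Hom rcup_in_Hom pad2_in_Hom[OF P], symmetric])
  finally show ?thesis .
qed

lemma tr_0: "x \<in> Hom A 0 0 \<Longrightarrow> tr A 0 x = x"
  unfolding tr_def by (simp add: tns_idn0_right cmp_idn_left cmp_idn_right)

lemma tr_Suc:
  assumes x: "x \<in> Hom A (Suc n) (Suc n)"
  shows "tr A (Suc n) x = tr A n (ptrace A n x)"
proof -
  note X = pad1_in_Hom_add2[OF x] and ev = ev_in_Hom[of n] and coev = coev_in_Hom[of n]
  have cap: "pad A n (rcap A n) \<in> Hom A (n + n + 2) (n + n)"
    and cup: "pad A n (rcup A n) \<in> Hom A (n + n) (n + n + 2)"
    and XX: "pad A n (pad A 1 x) \<in> Hom A (n + n + 2) (n + n + 2)"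
    by (rule pad_in_Hom[OF rcap_in_Hom] pad_in_Hom[OF rcup_in_Hom] pad_in_Hom[OF X]; simp)+
  have "tr A (Suc n) x
      = cmp A (cmp A (ev A n) (pad A n (rcap A n))) (cmp A (pad A n (pad A 1 x)) (cmp A (pad A n (rcup A n)) (coev A n)))"
    unfolding tr_def pad_pad[OF x] by (simp add: pad_def rcap_def rcup_def)
  also have "\<dots> = cmp A (ev A n) (cmp A (cmp A (pad A n (rcap A n)) (cmp A (pad A n (pad A 1 x)) (pad A n (rcup A n)))) (coev A n))"
    by (simp only: cmp_assoc[OF coev cup XX] cmp_assoc[OF coev cmp_in_Hom[OF cup XX] cap]
        cmp_assoc[OF cmp_in_Hom[OF coev cmp_in_Hom[OF cup XX]] cap ev, symmetric])
  also have "cmp A (pad A n (rcap A n)) (cmp A (pad A n (pad A 1 x)) (pad A n (rcup A n))) = pad A n (ptrace A n x)"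
    unfolding ptrace_def
    by (simp only: pad_cmp[OF rcup_in_Hom X] pad_cmp[OF cmp_in_Hom[OF rcup_in_Hom X] rcap_in_Hom])
  finally show ?thesis
    unfolding tr_def pad_def .
qed

lemma tr_scl:
  assumes x: "x \<in> Hom A n n"
  shows "tr A n (scl A a x) = scl A a (tr A n x)"
proof -
  have X: "tns A x (idn A n) \<in> Hom A (n + n) (n + n)" by (rule tns_in_Hom[OF x idn_in_Hom]) simp_all
  show ?thesis unfolding tr_def
    by (simp only: tns_scl_left[OF x idn_in_Hom] cmp_scl_left[OF coev_in_Hom X]
        cmp_scl_right[OF cmp_in_Hom[OF coev_in_Hom X] ev_in_Hom])
qed

lemma tr_Suc_eq_scl:
  "x \<in> Hom A (Suc n) (Suc n) \<Longrightarrow> y \<in> Hom A n n \<Longrightarrow> ptrace A n x = scl A r y \<Longrightarrow>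
    tr A (Suc n) x = scl A r (tr A n y)"
  by (simp add: tr_Suc tr_scl)

end

section \<open>The Wenzl recursion and the Jones--Wenzl projections\<close>

definition wenzl :: "('m::ab_group_add) pa \<Rightarrow> nat \<Rightarrow> complex \<Rightarrow> 'm \<Rightarrow> 'm" where
  "wenzl A n c p = pad A 1 p - scl A c (cmp A (cmp A (pad A 1 p) (e_last A n)) (pad A 1 p))"

definition idempotent_over :: "('m::ab_group_add) pa \<Rightarrow> nat \<Rightarrow> 'm \<Rightarrow> 'm \<Rightarrow> complex \<Rightarrow> bool" where
  "idempotent_over A n p q r \<longleftrightarrow>
     p \<in> Hom A (Suc n) (Suc n) \<and> q \<in> Hom A n n \<and> cmp A p p = p \<and> cmp A p (pad A 1 q) = p
     \<and> ptrace A n p = scl A r q"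

context planar_algebra
begin

lemma idempotent_sandwich_diff:
  assumes a: "a \<in> Hom A N N" and e: "e \<in> Hom A N N" and t: "t \<in> Hom A N N"
    and aa: "cmp A a a = a" and at: "cmp A a t = a"
    and eae: "cmp A (cmp A e a) e = scl A r (cmp A t e)" and cr: "c * r = 1"
  defines "p \<equiv> a - scl A c (cmp A (cmp A a e) a)"
  shows "p \<in> Hom A N N" and "cmp A p p = p" and "cmp A p a = p"
proof -
  define x where "x = cmp A (cmp A a e) a"
  have x: "x \<in> Hom A N N" unfolding x_def using a e by (simp add: End_simps)
  have aa': "cmp A (cmp A y a) a = cmp A y a" if "y \<in> Hom A N N" for y
    using cmp_assoc[OF a a that] aa by simp
  have ax: "cmp A a x = x" and xa: "cmp A x a = x"
    unfolding x_def using a e aa aa' by (simp_all add: End_simps)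
  have "cmp A x x = cmp A (cmp A a (cmp A (cmp A e a) e)) a"
    unfolding x_def using a e aa' by (simp add: End_simps)
  also have "\<dots> = scl A r x"
    unfolding eae x_def using a e t at by (simp add: End_simps[where n = N])
  finally have xx: "cmp A x x = scl A r x" .
  have p: "p = a - scl A c x" unfolding p_def x_def ..
  show "p \<in> Hom A N N" unfolding p using a x by (simp add: End_simps)
  show "cmp A p a = p" unfolding p using a x aa xa by (simp add: End_simps scl_diff_right)
  have "cmp A p p = a - scl A c x - scl A c x + scl A (c * c * r) x"
    unfolding p using a x aa ax xa xx by (simp add: End_simps scl_diff_right scl_scl mult.assoc)
  also have "\<dots> = p" unfolding p using cr by (simp add: mult.assoc scl_one)
  finally show "cmp A p p = p" .
qed

lemma wenzl_idempotent_over: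
  assumes loop: "cmp A (capm A) (cupm A) = scl A \<delta> (idn A 0)"
    and over: "idempotent_over A n p q r" and cr: "c * r = 1"
  shows "idempotent_over A (Suc n) (wenzl A n c p) p (\<delta> - c)"
proof -
  have p: "p \<in> Hom A (Suc n) (Suc n)" and q: "q \<in> Hom A n n" and pp: "cmp A p p = p"
    and pq: "cmp A p (pad A 1 q) = p" and tp: "ptrace A n p = scl A r q"
    using over unfolding idempotent_over_def by blast+
  have a: "pad A 1 p \<in> Hom A (Suc (Suc n)) (Suc (Suc n))"
    and e: "e_last A n \<in> Hom A (Suc (Suc n)) (Suc (Suc n))"
    and t: "pad A 2 q \<in> Hom A (Suc (Suc n)) (Suc (Suc n))"
    using pad1_in_Hom_add2[OF p] e_last_in_Hom[of n] pad2_in_Hom[OF q] by simp_all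
  have aea: "cmp A (cmp A (pad A 1 p) (e_last A n)) (pad A 1 p) \<in> Hom A (Suc (Suc n)) (Suc (Suc n))"
    using a e by (simp add: End_simps)
  have aa: "cmp A (pad A 1 p) (pad A 1 p) = pad A 1 p"
    unfolding pad_cmp[OF p p, symmetric] pp ..
  have at: "cmp A (pad A 1 p) (pad A 2 q) = pad A 1 p"
    unfolding pad1_pad1[OF q, symmetric] pad_cmp[OF pad1_in_Hom[OF q] p, symmetric] pq ..
  have eae: "cmp A (cmp A (e_last A n) (pad A 1 p)) (e_last A n) = scl A r (cmp A (pad A 2 q) (e_last A n))"
    unfolding e_last_sandwich[OF p] tp pad_scl[OF q] by (rule cmp_scl_left[OF e t])
  note step = idempotent_sandwich_diff[OF a e t aa at eae cr, folded wenzl_def]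
  have "ptrace A (Suc n) (wenzl A n c p)
      = scl A \<delta> p - scl A c (cmp A (cmp A p (ptrace A (Suc n) (e_last A n))) p)"
    unfolding wenzl_def
    by (simp only: ptrace_diff[OF a scl_in_Hom[OF aea]] ptrace_scl[OF aea] ptrace_pad[OF loop p]
        ptrace_sandwich[OF p p e])
  also have "\<dots> = scl A (\<delta> - c) p"
    unfolding ptrace_e_last cmp_idn_right[OF p] pp scl_diff_left ..
  finally show ?thesis
    using step p unfolding idempotent_over_def by blast
qed

lemma tr_idempotent_over: "idempotent_over A n p q r \<Longrightarrow> tr A (Suc n) p = scl A r (tr A n q)"
  unfolding idempotent_over_def by (simp add: tr_Suc tr_scl)

lemma wenzl_in_Hom: "p \<in> Hom A (Suc n) (Suc n) \<Longrightarrow> wenzl A n c p \<in> Hom A (Suc (Suc n)) (Suc (Suc n))"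
  unfolding wenzl_def using pad1_in_Hom_add2 e_last_in_Hom[of n] by (simp add: End_simps)

lemma TLe_eq_pad_e_last: "TLe A (k + 2 + m) (Suc k) = pad A m (e_last A k)"
  unfolding TLe_def pad_def e_last_eq_tns by simp

lemma TLe_last: "TLe A (Suc (Suc k)) (Suc k) = e_last A k"
  using TLe_eq_pad_e_last[of k 0] pad_zero[OF e_last_in_Hom] by simp

lemma jw_Suc_Suc: "jw A (Suc (Suc k)) = wenzl A k (of_nat (Suc k) / of_nat (Suc (Suc k))) (jw A (Suc k))"
  by (simp only: jw.simps Let_def TLe_last wenzl_def pad_def)

lemma jw_in_Hom: "jw A n \<in> Hom A n n"
  by (induction n rule: induct_nat_012) (simp_all add: idn_in_Hom jw_Suc_Suc wenzl_in_Hom del: jw.simps(3))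

lemma jw_idempotent_over:
  assumes loop: "cmp A (capm A) (cupm A) = scl A 2 (idn A 0)"
  shows "idempotent_over A j (jw A (Suc j)) (jw A j) (of_nat (Suc (Suc j)) / of_nat (Suc j))"
proof (induction j)
  case 0
  have "ptrace A 0 (idn A 1) = scl A 2 (idn A 0)"
    using ptrace_pad[OF loop idn_in_Hom, of 0] by (simp add: pad_idn)
  then show ?case
    unfolding idempotent_over_def by (simp add: idn_in_Hom cmp_idn_idn pad_idn)
next
  case (Suc j)
  define c :: complex where "c = of_nat (Suc j) / of_nat (Suc (Suc j))"
  have "c * (of_nat (Suc (Suc j)) / of_nat (Suc j)) = 1"
    unfolding c_def by (simp add: field_simps del: of_nat_Suc)
  moreover have "2 - c = of_nat (Suc (Suc (Suc j))) / of_nat (Suc (Suc j))"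
    unfolding c_def by (simp add: field_simps del: of_nat_Suc) (simp add: algebra_simps)
  ultimately show ?case
    using wenzl_idempotent_over[OF loop Suc.IH, of c] by (simp only: c_def jw_Suc_Suc)
qed

lemma tr_jw:
  assumes loop: "cmp A (capm A) (cupm A) = scl A 2 (idn A 0)"
  shows "tr A n (jw A n) = scl A (of_nat (Suc n)) (idn A 0)"
proof (induction n)
  case 0
  then show ?case by (simp add: tr_0 idn_in_Hom scl_one)
next
  case (Suc n)
  then show ?case
    by (simp add: tr_idempotent_over[OF jw_idempotent_over[OF loop]] scl_scl field_simps del: of_nat_Suc)
qed

lemma absorbs_wenzl_diff:
  assumes s: "s \<in> Hom A N N" and a: "a \<in> Hom A N N" and e: "e \<in> Hom A N N"
    and sa: "cmp A s a = s" and as: "cmp A a s = s" and se: "cmp A s e = 0" and es: "cmp A e s = 0"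
  shows "cmp A s (a - scl A c (cmp A (cmp A a e) a)) = s \<and> cmp A (a - scl A c (cmp A (cmp A a e) a)) s = s"
proof -
  have aea: "cmp A (cmp A a e) a \<in> Hom A N N" using a e by (simp add: End_simps)
  have left: "cmp A s (cmp A (cmp A a e) a) = 0"
    using cmp_assoc[OF a cmp_in_Hom[OF e a] s] cmp_assoc[OF e a s] sa se cmp_zero_left[OF a] by simp
  have "cmp A (cmp A (cmp A a e) a) s = cmp A a (cmp A e s)"
    using cmp_assoc[OF s a cmp_in_Hom[OF e a]] cmp_assoc[OF s e a] as by simp
  then have right: "cmp A (cmp A (cmp A a e) a) s = 0"
    using es cmp_zero_right[OF a] by simp
  show ?thesis
    unfolding cmp_diff_right[OF a scl_in_Hom[OF aea] s] cmp_diff_left[OF s a scl_in_Hom[OF aea]]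
      cmp_scl_right[OF aea s] cmp_scl_left[OF s aea] left right sa as
    by (simp add: scl_zero_right)
qed

lemma uncappable_absorbs_jw:
  assumes s: "s \<in> Hom A n n"
    and uncappable: "\<And>j. 0 < j \<Longrightarrow> j < n \<Longrightarrow> cmp A (TLe A n j) s = 0 \<and> cmp A s (TLe A n j) = 0"
  shows "cmp A s (jw A n) = s \<and> cmp A (jw A n) s = s"
proof -
  have "cmp A s (pad A (n - k) (jw A k)) = s \<and> cmp A (pad A (n - k) (jw A k)) s = s" if "k \<le> n" for k
    using that
  proof (induction k rule: induct_nat_012)
    case 0
    then show ?case using s by (simp add: pad_idn cmp_idn_left cmp_idn_right)
  next
    case 1
    then show ?case using s by (simp add: pad_idn cmp_idn_left cmp_idn_right)
  next
    case (ge2 k)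
    define m where "m = n - Suc (Suc k)"
    have n: "n = k + 2 + m" using ge2.prems unfolding m_def by simp
    note p = jw_in_Hom[of "Suc k"]
    have a: "pad A (Suc m) (jw A (Suc k)) \<in> Hom A n n" by (rule pad_in_Hom[OF p]) (simp_all add: n)
    have e: "TLe A n (Suc k) \<in> Hom A n n"
      unfolding n TLe_eq_pad_e_last by (rule pad_in_Hom[OF e_last_in_Hom]) simp_all
    have "pad A (n - Suc (Suc k)) (jw A (Suc (Suc k)))
        = pad A (Suc m) (jw A (Suc k)) - scl A (of_nat (Suc k) / of_nat (Suc (Suc k)))
            (cmp A (cmp A (pad A (Suc m) (jw A (Suc k))) (TLe A n (Suc k))) (pad A (Suc m) (jw A (Suc k))))"
      unfolding jw_Suc_Suc wenzl_def m_def[symmetric] pad_wenzl[OF pad1_in_Hom_add2[OF p] e_last_in_Hom]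
        pad_pad[OF p] n TLe_eq_pad_e_last by simp
    moreover have "cmp A s (pad A (Suc m) (jw A (Suc k))) = s \<and> cmp A (pad A (Suc m) (jw A (Suc k))) s = s"
      using ge2.IH(2) ge2.prems unfolding m_def by (simp add: Suc_diff_Suc)
    ultimately show ?case
      using absorbs_wenzl_diff[OF s a e] uncappable[of "Suc k"] ge2.prems by simp
  qed
  from this[of n] show ?thesis
    using pad_zero[OF jw_in_Hom] by simp
qed

lemma square_in_span:
  assumes f: "f \<in> Hom A n n" and s: "s \<in> Hom A n n"
    and ff: "cmp A f f = f" and fs: "cmp A f s = s" and sf: "cmp A s f = s"
    and ss: "cmp A s s = scl A \<alpha> f + scl A \<beta> s"
  shows "cmp A (scl A a f + scl A b s) (scl A a f + scl A b s)
       = scl A (a * a + \<alpha> * b * b) f + scl A (2 * a * b + \<beta> * b * b) s"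
  using f s
  by (simp add: End_simps[where n = n] ff fs sf ss scl_add_right scl_scl scl_add_left ac_simps)
    (simp flip: scl_add_left add: ac_simps)

end

section \<open>The projections built from the generator\<close>

locale planar_algebra_with_generator = planar_algebra +
  fixes S :: "'m::ab_group_add"
  assumes generator_rels: "generator_rels A S"
begin

lemma S_in_Hom: "S \<in> Hom A 4 4"
  using generator_rels unfolding generator_rels_def by blast

lemma loop_value: "cmp A (capm A) (cupm A) = scl A 2 (idn A 0)"
  using generator_rels unfolding generator_rels_def by blast

lemma S_uncappable:
  assumes "0 < j" and "j < 4"
  shows "cmp A (TLe A 4 j) S = 0 \<and> cmp A S (TLe A 4 j) = 0"
proof -
  have "j \<in> {1, 2, 3}" using assms by simp presburger
  then show ?thesis using generator_rels unfolding generator_rels_def by blast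
qed

lemma ptrace_S: "ptrace A 3 S = 0"
  using generator_rels unfolding generator_rels_def ptrace_def pad_def rcap_def rcup_def by blast

lemma S_squared: "cmp A S S = scl A 6 (jw A 4) + S"
  using generator_rels unfolding generator_rels_def by blast

lemma jw4_absorbs_S: "cmp A S (jw A 4) = S \<and> cmp A (jw A 4) S = S"
  by (rule uncappable_absorbs_jw[OF S_in_Hom S_uncappable])

lemma jw4_idempotent_over: "idempotent_over A 3 (jw A 4) (jw A 3) (5/4)"
  using jw_idempotent_over[OF loop_value, of 3] by simp

lemma P4_in_Hom: "P4 A S \<in> Hom A 4 4"
  unfolding P4_def using jw_in_Hom[of 4] S_in_Hom by (simp add: End_simps)

lemma P4_idempotent: "cmp A (P4 A S) (P4 A S) = P4 A S"
proof -
  have f: "jw A 4 \<in> Hom A 4 4" and ff: "cmp A (jw A 4) (jw A 4) = jw A 4"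
    using jw4_idempotent_over unfolding idempotent_over_def by simp_all
  have P4: "P4 A S = scl A (3/5) (jw A 4) + scl A (- 1/5) S"
    unfolding P4_def by (simp add: diff_eq_add_scl scl_scl)
  have "cmp A S S = scl A 6 (jw A 4) + scl A 1 S" unfolding S_squared scl_one ..
  then show ?thesis
    unfolding P4 using square_in_span[OF f S_in_Hom ff] jw4_absorbs_S by simp
qed

lemma P4_absorbs_jw3: "cmp A (P4 A S) (pad A 1 (jw A 3)) = P4 A S"
proof -
  have f: "jw A 4 \<in> Hom A 4 4" and g: "pad A 1 (jw A 3) \<in> Hom A 4 4"
    using jw_in_Hom pad1_in_Hom[OF jw_in_Hom[of 3]] by simp_all
  have fg: "cmp A (jw A 4) (pad A 1 (jw A 3)) = jw A 4"
    using jw4_idempotent_over unfolding idempotent_over_def by simp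
  have "cmp A S (pad A 1 (jw A 3)) = S"
    using cmp_assoc[OF g f S_in_Hom] fg jw4_absorbs_S by simp
  then show ?thesis
    unfolding P4_def using f g S_in_Hom fg by (simp add: End_simps[where n = 4])
qed

lemma ptrace_jw4: "ptrace A 3 (jw A 4) = scl A (5/4) (jw A 3)"
  using jw4_idempotent_over unfolding idempotent_over_def by simp

lemma ptrace_P4: "ptrace A 3 (P4 A S) = scl A (3/4) (jw A 3)"
proof -
  have f: "jw A 4 \<in> Hom A (Suc 3) (Suc 3)" and s: "S \<in> Hom A (Suc 3) (Suc 3)"
    using jw_in_Hom[of 4] S_in_Hom by simp_all
  have "ptrace A 3 (P4 A S) = scl A (3/5) (ptrace A 3 (jw A 4)) - scl A (1/5) (ptrace A 3 S)"
    unfolding P4_def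
    by (simp only: ptrace_diff[OF scl_in_Hom[OF f] scl_in_Hom[OF s]] ptrace_scl[OF f] ptrace_scl[OF s])
  then show ?thesis
    by (simp add: ptrace_jw4 ptrace_S scl_scl scl_zero_right)
qed

lemma P4_idempotent_over: "idempotent_over A 3 (P4 A S) (jw A 3) (3/4)"
  unfolding idempotent_over_def
  using P4_in_Hom jw_in_Hom P4_idempotent P4_absorbs_jw3 ptrace_P4 by simp

lemma P5_eq_wenzl: "P5 A S = wenzl A 3 (4/3) (P4 A S)"
  using TLe_last[of 3] by (simp add: P5_def wenzl_def pad_def Let_def)

lemma P5_idempotent_over: "idempotent_over A 4 (P5 A S) (P4 A S) (2/3)"
  using wenzl_idempotent_over[OF loop_value P4_idempotent_over, of "4/3"] by (simp add: P5_eq_wenzl)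

lemma P6_eq_wenzl: "P6 A S = wenzl A 4 (3/2) (P5 A S)"
  using TLe_last[of 4] by (simp add: P6_def wenzl_def pad_def Let_def)

lemma P6_idempotent_over: "idempotent_over A 5 (P6 A S) (P5 A S) (1/2)"
  using wenzl_idempotent_over[OF loop_value P5_idempotent_over, of "3/2"] by (simp add: P6_eq_wenzl)

lemma tr_jw3: "tr A 3 (jw A 3) = scl A 4 (idn A 0)"
  using tr_jw[OF loop_value, of 3] by simp

lemma tr_P4: "tr A 4 (P4 A S) = scl A 3 (idn A 0)"
  using tr_idempotent_over[OF P4_idempotent_over] tr_jw3 by (simp add: scl_scl)

lemma tr_Q4: "tr A 4 (Q4 A S) = scl A 2 (idn A 0)"
proof -
  have f: "jw A 4 \<in> Hom A (Suc 3) (Suc 3)" and s: "S \<in> Hom A (Suc 3) (Suc 3)"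
    using jw_in_Hom[of 4] S_in_Hom by simp_all
  have "ptrace A 3 (Q4 A S) = scl A (2/5) (ptrace A 3 (jw A 4)) + scl A (1/5) (ptrace A 3 S)"
    unfolding Q4_def
    by (simp only: ptrace_add[OF scl_in_Hom[OF f] scl_in_Hom[OF s]] ptrace_scl[OF f] ptrace_scl[OF s])
  then have ptrace_Q4: "ptrace A 3 (Q4 A S) = scl A (1/2) (jw A 3)"
    by (simp add: ptrace_jw4 ptrace_S scl_scl scl_zero_right)
  have "Q4 A S \<in> Hom A (Suc 3) (Suc 3)"
    unfolding Q4_def using jw_in_Hom[of 4] S_in_Hom by (simp add: End_simps[where n = 4])
  then show ?thesis
    using tr_Suc_eq_scl[OF _ jw_in_Hom ptrace_Q4] tr_jw3 by (simp add: scl_scl)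
qed

lemma tr_P5: "tr A 5 (P5 A S) = scl A 2 (idn A 0)"
  using tr_idempotent_over[OF P5_idempotent_over] tr_P4 by (simp add: scl_scl)

lemma tr_P6: "tr A 6 (P6 A S) = idn A 0"
  using tr_idempotent_over[OF P6_idempotent_over] tr_P5 by (simp add: scl_scl scl_one)

end

theorem lemma4p7:
  fixes A :: "('m::ab_group_add) pa" and S :: 'm
  assumes "is_planar_algebra A"
    and "generator_rels A S"
  shows "tr A 0 (idn A 0) = idn A 0
       \<and> tr A 1 (idn A 1) = scl A 2 (idn A 0)
       \<and> tr A 2 (jw A 2) = scl A 3 (idn A 0)
       \<and> tr A 3 (jw A 3) = scl A 4 (idn A 0)
       \<and> tr A 4 (P4 A S) = scl A 3 (idn A 0)
       \<and> tr A 5 (P5 A S) = scl A 2 (idn A 0)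
       \<and> tr A 6 (P6 A S) = idn A 0
       \<and> tr A 4 (Q4 A S) = scl A 2 (idn A 0)"
proof -
  interpret planar_algebra_with_generator A S
    using assms by (simp add: planar_algebra_with_generator_def planar_algebra_with_generator_axioms_def
        planar_algebra_def)
  show ?thesis
    using tr_0[OF idn_in_Hom] tr_jw[OF loop_value, of 1] tr_jw[OF loop_value, of 2]
      tr_jw3 tr_P4 tr_P5 tr_P6 tr_Q4
    by simp
qed

end
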